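(* Let $\Theta\subseteq F(V)$ be a $\mathrm{q}\L^{*}$-theory. Then $[\Theta]_\sim=\{[p]_\sim\in[F(V)]_\sim: p\in\Theta\}$ is a filter of the MV*-algebra $\langle [F(V)]_\sim;\oplus,-,[0]_\sim,[1]_\sim\rangle$, where $-[p]_\sim=[\neg p]_\sim$, $[p]_\sim\oplus[q]_\sim=[\neg p\to q]_\sim$ and $[0]_\sim=[p\to p]_\sim$.
   Context: Let $V=\{p_1,p_2,\ldots\}$ be a set of propositional variables and $F(V)$ the set of formulas built from $V$ and the constant $1$ with the binary connective $\to$ and the unary connectives $\neg$, ${}^{+}$, ${}^{-}$ (postfix ${}^+,{}^-$ bind tighter than $\neg$, which binds tighter than $\to$). Abbreviations: $p\vee q:=((p^{+}\to q^{+})^{+}\to(\neg p)^{-})\to((q^{-}\to p^{-})^{-}\to p^{-})$; an axiom written $A\leftrightarrow B$ stands for the two axioms $A\to B$ and $B\to A$. Axiom schemas of $\mathrm{q}\L^{*}$ (for all formulas $p,q,r$): (Q1) $(p\to q)\leftrightarrow(\neg q\to\neg p)$; (Q2) $1\leftrightarrow((1\to p)\to 1)$; (Q3) $p\leftrightarrow((q\to q)\to p)$; (Q4) $(p\to q)\leftrightarrow((q^{+}\to p^{-})\to(p^{+}\to q^{-}))$; (Q5) $\neg(p\to q)\leftrightarrow(q\to p)$; (Q6) $(p\to(\neg p\to q))^{+}\leftrightarrow(p^{+}\to(\neg p^{+}\to q^{+}))$; (Q7) $(p\to(q\vee r))\leftrightarrow((p\to r)\vee(p\to q))$; (Q8)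 $(p\vee(q\vee r))\leftrightarrow((p\vee q)\vee r)$; (Q9) $((p\to 1)\to((q\to 1)\to r))\to((q\to 1)\to((p\to 1)\to r))$; (Q10) $p\to 1$; (Q11) $((1\to 1)\to p^{+})\leftrightarrow((p\to 1)\to 1)$ and $((1\to 1)\to p^{-})\leftrightarrow((p\to\neg 1)\to\neg 1)$. Deduction rules: (R1) from $p$ and $p\to q$ infer $(r\to r)\to q$; (R2) from $(r\to r)\to(p\to q)$ infer $p\to q$; (R3) from $p\to q$ and $r\to t$ infer $(q\to r)\to(p\to t)$. For $\Gamma\subseteq F(V)$, $\Gamma\vdash q$ means there is a finite sequence ending in $q$ each member of which is an axiom, a member of $\Gamma$, or obtained from earlier members by a rule; $\Gamma^{\vdash}$ is the set of all such $q$. A $\mathrm{q}\L^{*}$-theory is a set $\Theta\subseteq F(V)$ with $\Theta^{\vdash}=\Theta$. The relation $p\sim q$ iff $\vdash p\to q$ and $\vdash q\to p$ (provable from the empty set) is a congruence and $[p]_\sim$ denotes the class of $p$. An MV*-algebra is an algebra $\langle B;\oplus,-,0,1\rangle$ of type $\langle2,1,0,0\rangle$ satisfying for all $x,y,z$: (MV*1) $x\oplus y=y\oplus x$; (MV*2) $(1\oplus x)\oplus(y\oplus(1\oplus z))=((1\oplus x)\oplus y)\oplus(1\oplus z)$; (MV*3) $x\oplus(-x)=0$; (MV*4) $(x\oplus 1)\oplus 1=1$; (MV*5) $x\oplus 0=x$; (MV*6) $-(x\oplus y)=(-x)\oplus(-y)$; (MV*7) $-(-x)=x$; (MV*8) $x\oplus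 y=(x^{+}\oplus y^{+})\oplus(x^{-}\oplus y^{-})$; (MV*9) $(-x\oplus(x\oplus y))^{+}=-(x^{+})\oplus(x^{+}\oplus y^{+})$; (MV*10) $x\vee y=y\vee x$; (MV*11) $x\vee(y\vee z)=(x\vee y)\vee z$; (MV*12) $x\oplus(y\vee z)=(x\oplus y)\vee(x\oplus z)$; where $x^{+}:=1\oplus(-1\oplus x)$, $x^{-}:=-1\oplus(1\oplus x)$, $x\vee y:=(x^{+}\oplus(-x^{+}\oplus y^{+})^{+})\oplus(x^{-}\oplus(-x^{-}\oplus y^{-})^{+})$. Write $y\ominus x:=y\oplus(-x)$. A filter of an MV*-algebra $\mathbf{B}$ is a subset $F\subseteq B$ such that: (F1) $\{x^{+}:x\in B\}\subseteq F$; (F2) if $x\in F$ and $y\ominus x\in F$ then $y\in F$; (F3) if $x\oplus y\in F$ and $t\in B$ then $(x\oplus t)\oplus(y\ominus t)\in F$. *)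

theory Defs
  imports Main
begin

datatype form = Var nat | One | Imp form form | Neg form | Pos form | Mns form

definition Vee :: "form \<Rightarrow> form \<Rightarrow> form" where
  "Vee p q = Imp (Imp (Pos (Imp (Pos p) (Pos q))) (Mns (Neg p)))
                  (Imp (Mns (Imp (Mns q) (Mns p))) (Mns p))"

text \<open>Axiom schemas of qL*; A <-> B stands for both implications.\<close>
inductive axiom :: "form \<Rightarrow> bool" where
  Q1a: "axiom (Imp (Imp p q) (Imp (Neg q) (Neg p)))"
| Q1b: "axiom (Imp (Imp (Neg q) (Neg p)) (Imp p q))"
| Q2a: "axiom (Imp One (Imp (Imp One p) One))"
| Q2b: "axiom (Imp (Imp (Imp One p) One) One)"
| Q3a: "axiom (Imp p (Imp (Imp q q) p))"
| Q3b: "axiom (Imp (Imp (Imp q q) p) p)"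
| Q4a: "axiom (Imp (Imp p q) (Imp (Imp (Pos q) (Mns p)) (Imp (Pos p) (Mns q))))"
| Q4b: "axiom (Imp (Imp (Imp (Pos q) (Mns p)) (Imp (Pos p) (Mns q))) (Imp p q))"
| Q5a: "axiom (Imp (Neg (Imp p q)) (Imp q p))"
| Q5b: "axiom (Imp (Imp q p) (Neg (Imp p q)))"
| Q6a: "axiom (Imp (Pos (Imp p (Imp (Neg p) q))) (Imp (Pos p) (Imp (Neg (Pos p)) (Pos q))))"
| Q6b: "axiom (Imp (Imp (Pos p) (Imp (Neg (Pos p)) (Pos q))) (Pos (Imp p (Imp (Neg p) q))))"
| Q7a: "axiom (Imp (Imp p (Vee q r)) (Vee (Imp p r) (Imp p q)))"
| Q7b: "axiom (Imp (Vee (Imp p r) (Imp p q)) (Imp p (Vee q r)))"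
| Q8a: "axiom (Imp (Vee p (Vee q r)) (Vee (Vee p q) r))"
| Q8b: "axiom (Imp (Vee (Vee p q) r) (Vee p (Vee q r)))"
| Q9: "axiom (Imp (Imp (Imp p One) (Imp (Imp q One) r)) (Imp (Imp q One) (Imp (Imp p One) r)))"
| Q10: "axiom (Imp p One)"
| Q11a: "axiom (Imp (Imp (Imp One One) (Pos p)) (Imp (Imp p One) One))"
| Q11b: "axiom (Imp (Imp (Imp p One) One) (Imp (Imp One One) (Pos p)))"
| Q11c: "axiom (Imp (Imp (Imp One One) (Mns p)) (Imp (Imp p (Neg One)) (Neg One)))"
| Q11d: "axiom (Imp (Imp (Imp p (Neg One)) (Neg One)) (Imp (Imp One One) (Mns p)))"

inductive deriv :: "form set \<Rightarrow> form \<Rightarrow> bool" where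
  ax: "axiom p \<Longrightarrow> deriv \<Gamma> p"
| hyp: "p \<in> \<Gamma> \<Longrightarrow> deriv \<Gamma> p"
| R1: "deriv \<Gamma> p \<Longrightarrow> deriv \<Gamma> (Imp p q) \<Longrightarrow> deriv \<Gamma> (Imp (Imp r r) q)"
| R2: "deriv \<Gamma> (Imp (Imp r r) (Imp p q)) \<Longrightarrow> deriv \<Gamma> (Imp p q)"
| R3: "deriv \<Gamma> (Imp p q) \<Longrightarrow> deriv \<Gamma> (Imp r t) \<Longrightarrow> deriv \<Gamma> (Imp (Imp q r) (Imp p t))"

definition is_theory :: "form set \<Rightarrow> bool" where
  "is_theory \<Theta> \<longleftrightarrow> {q. deriv \<Theta> q} = \<Theta>"

definition equiv_rel :: "form \<Rightarrow> form \<Rightarrow> bool" where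
  "equiv_rel p q \<longleftrightarrow> deriv {} (Imp p q) \<and> deriv {} (Imp q p)"

definition cls :: "form \<Rightarrow> form set" where
  "cls p = {q. equiv_rel p q}"

definition Lind :: "form set set" where
  "Lind = range cls"

text \<open>Operations on classes via a chosen representative (well defined since ~ is a congruence).\<close>
definition rep :: "form set \<Rightarrow> form" where
  "rep X = (SOME p. X = cls p)"

definition L_neg :: "form set \<Rightarrow> form set" where
  "L_neg X = cls (Neg (rep X))"

definition L_oplus :: "form set \<Rightarrow> form set \<Rightarrow> form set" where
  "L_oplus X Y = cls (Imp (Neg (rep X)) (rep Y))"

definition L_zero :: "form set" where
  "L_zero = cls (Imp One One)"

definition L_one :: "form set" where
  "L_one = cls One"

definition mv_pos :: "('a \<Rightarrow> 'a \<Rightarrow> 'a) \<Rightarrow> ('a \<Rightarrow> 'a) \<Rightarrow> 'a \<Rightarrow> 'a \<Rightarrow> 'a" where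
  "mv_pos pl ng e x = pl e (pl (ng e) x)"

definition is_filter :: "'a set \<Rightarrow> ('a \<Rightarrow> 'a \<Rightarrow> 'a) \<Rightarrow> ('a \<Rightarrow> 'a) \<Rightarrow> 'a \<Rightarrow> 'a \<Rightarrow> 'a set \<Rightarrow> bool" where
  "is_filter B pl ng z e F \<longleftrightarrow>
     F \<subseteq> B \<and>
     (\<forall>x\<in>B. mv_pos pl ng e x \<in> F) \<and>
     (\<forall>x\<in>B. \<forall>y\<in>B. x \<in> F \<longrightarrow> pl y (ng x) \<in> F \<longrightarrow> y \<in> F) \<and>
     (\<forall>x\<in>B. \<forall>y\<in>B. \<forall>t\<in>B. pl x y \<in> F \<longrightarrow> pl (pl x t) (pl y (ng t)) \<in> F)"

end

theory Submission
  imports Defs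
begin

text \<open>
  Since \<open>[p] \<oplus> [q] = [\<not>p \<rightarrow> q]\<close>, every filter condition becomes a derivability statement.
  The calculus has no modus ponens: R1 only yields conclusions guarded by \<open>r \<rightarrow> r\<close>, so
  \<open>[p] \<in> [\<Theta>]\<close> means \<open>\<Theta> \<turnstile> (1 \<rightarrow> 1) \<rightarrow> p\<close>, which for an implication \<open>p\<close> is just \<open>\<Theta> \<turnstile> p\<close>.
  Then (F1) holds because \<open>\<not>1 \<rightarrow> (\<not>\<not>1 \<rightarrow> x)\<close> is a theorem, (F2) is contraposition
  followed by transitivity, and (F3) reduces, via \<open>\<not>(\<not>x \<rightarrow> t) \<sim> x \<rightarrow> \<not>t\<close> and
  \<open>\<not>y \<rightarrow> x\<close>, to antitonicity of \<open>\<rightarrow>\<close> in its antecedent.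
\<close>

lemma deriv_mono: "deriv \<Gamma> p \<Longrightarrow> \<Gamma> \<subseteq> \<Gamma>' \<Longrightarrow> deriv \<Gamma>' p"
  by (induction rule: deriv.induct) (auto intro: deriv.intros)

lemma deriv_from_empty: "deriv {} p \<Longrightarrow> deriv \<Gamma> p"
  using deriv_mono by blast

lemma deriv_imp_mp:
  "deriv \<Gamma> a \<Longrightarrow> deriv \<Gamma> (Imp a (Imp b c)) \<Longrightarrow> deriv \<Gamma> (Imp b c)"
  using deriv.R1[of \<Gamma> a "Imp b c" a] deriv.R2 by blast

lemma deriv_axiom_imp_mp:
  "deriv \<Gamma> a \<Longrightarrow> axiom (Imp a (Imp b c)) \<Longrightarrow> deriv \<Gamma> (Imp b c)"
  using deriv_imp_mp deriv.ax by blast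

lemma deriv_imp_trans: "deriv \<Gamma> (Imp a b) \<Longrightarrow> deriv \<Gamma> (Imp b c) \<Longrightarrow> deriv \<Gamma> (Imp a c)"
  using deriv.R3[of \<Gamma> a b b c] deriv.R2 by blast

lemma deriv_imp_refl: "deriv \<Gamma> (Imp p p)"
proof -
  have "deriv \<Gamma> (Imp (Neg p) (Neg p))"
    using deriv.R2[OF deriv.ax[OF axiom.Q1a[of p p]]] .
  then show ?thesis
    using deriv_axiom_imp_mp axiom.Q1b by blast
qed

lemma deriv_contrapos: "deriv \<Gamma> (Imp p q) \<Longrightarrow> deriv \<Gamma> (Imp (Neg q) (Neg p))"
  using deriv_axiom_imp_mp axiom.Q1a by blast

lemma deriv_contrapos_rev: "deriv \<Gamma> (Imp (Neg q) (Neg p)) \<Longrightarrow> deriv \<Gamma> (Imp p q)"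
  using deriv_axiom_imp_mp axiom.Q1b by blast

lemma equiv_rel_refl: "equiv_rel p p"
  unfolding equiv_rel_def using deriv_imp_refl by blast

lemma equiv_rel_sym: "equiv_rel p q \<Longrightarrow> equiv_rel q p"
  unfolding equiv_rel_def by blast

lemma equiv_rel_trans [trans]: "equiv_rel p q \<Longrightarrow> equiv_rel q r \<Longrightarrow> equiv_rel p r"
  unfolding equiv_rel_def using deriv_imp_trans by blast

lemma equiv_rel_Neg: "equiv_rel p q \<Longrightarrow> equiv_rel (Neg p) (Neg q)"
  unfolding equiv_rel_def using deriv_contrapos by blast

lemma equiv_rel_Imp: "equiv_rel a a' \<Longrightarrow> equiv_rel b b' \<Longrightarrow> equiv_rel (Imp a b) (Imp a' b')"
  unfolding equiv_rel_def using deriv.R3 by blast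

lemma equiv_rel_top_imp: "equiv_rel p (Imp (Imp One One) p)"
  unfolding equiv_rel_def by (auto intro: deriv.ax axiom.intros)

lemma equiv_rel_Neg_Imp: "equiv_rel (Neg (Imp p q)) (Imp q p)"
  unfolding equiv_rel_def by (auto intro: deriv.ax axiom.intros)

lemma equiv_rel_Neg_Neg: "equiv_rel (Neg (Neg p)) p"
proof -
  let ?a = "Imp (Imp One One) p"
  have "equiv_rel (Neg (Neg p)) (Neg (Neg ?a))"
    by (intro equiv_rel_Neg equiv_rel_top_imp)
  also have "equiv_rel (Neg (Neg ?a)) (Neg (Imp p (Imp One One)))"
    by (intro equiv_rel_Neg equiv_rel_Neg_Imp)
  also have "equiv_rel (Neg (Imp p (Imp One One))) ?a"
    by (rule equiv_rel_Neg_Imp)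
  also have "equiv_rel ?a p"
    by (rule equiv_rel_sym[OF equiv_rel_top_imp])
  finally show ?thesis .
qed

lemma deriv_Neg_Neg_elim: "deriv \<Gamma> (Imp (Neg (Neg p)) p)"
  and deriv_Neg_Neg_intro: "deriv \<Gamma> (Imp p (Neg (Neg p)))"
  using equiv_rel_Neg_Neg[of p] deriv_from_empty unfolding equiv_rel_def by blast+

lemma deriv_Neg_imp_swap: "deriv \<Gamma> (Imp (Neg x) y) \<Longrightarrow> deriv \<Gamma> (Imp (Neg y) x)"
  using deriv_imp_trans[OF deriv_contrapos deriv_Neg_Neg_elim] .

lemma equiv_rel_Neg_Imp_Neg: "equiv_rel (Neg (Imp (Neg x) t)) (Imp x (Neg t))"
proof -
  have "equiv_rel (Neg (Imp (Neg x) t)) (Imp t (Neg x))"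
    by (rule equiv_rel_Neg_Imp)
  also have "equiv_rel (Imp t (Neg x)) (Imp (Neg (Neg x)) (Neg t))"
    unfolding equiv_rel_def by (auto intro: deriv.ax axiom.intros)
  also have "equiv_rel (Imp (Neg (Neg x)) (Neg t)) (Imp x (Neg t))"
    by (intro equiv_rel_Imp equiv_rel_Neg_Neg equiv_rel_refl)
  finally show ?thesis .
qed

lemma deriv_Neg_One_imp: "deriv {} (Imp (Neg One) (Imp (Neg (Neg One)) x))"
proof -
  have "deriv {} (Imp (Imp x One) One)"
    by (auto intro: deriv.ax axiom.intros)
  moreover have "deriv {} (Imp (Imp (Imp x One) One) (Imp (Neg (Imp One x)) (Neg (Neg One))))"
    by (rule deriv.R3) (auto intro: deriv.ax axiom.intros deriv_Neg_Neg_intro)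
  ultimately have "deriv {} (Imp (Neg (Imp One x)) (Neg (Neg One)))"
    by (rule deriv_imp_mp)
  then have "deriv {} (Imp (Neg One) (Imp One x))"
    by (rule deriv_contrapos_rev)
  moreover have "deriv {} (Imp (Imp (Neg One) (Imp One x)) (Imp (Neg One) (Imp (Neg (Neg One)) x)))"
    by (intro deriv.R3 deriv_imp_refl deriv_Neg_Neg_elim)
  ultimately show ?thesis
    by (rule deriv_imp_mp)
qed

lemma cls_eq_iff: "cls p = cls q \<longleftrightarrow> equiv_rel p q"
  unfolding cls_def using equiv_rel_refl equiv_rel_sym equiv_rel_trans by blast

lemma equiv_rel_rep_cls: "equiv_rel (rep (cls p)) p"
proof -
  have "cls p = cls (rep (cls p))"
    unfolding rep_def by (rule someI[of "\<lambda>q. cls p = cls q"]) simp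
  then show ?thesis
    using cls_eq_iff equiv_rel_sym by blast
qed

lemma L_neg_cls: "L_neg (cls p) = cls (Neg p)"
  unfolding L_neg_def cls_eq_iff using equiv_rel_Neg[OF equiv_rel_rep_cls] .

lemma L_oplus_cls: "L_oplus (cls a) (cls b) = cls (Imp (Neg a) b)"
  unfolding L_oplus_def cls_eq_iff
  using equiv_rel_Imp[OF equiv_rel_Neg[OF equiv_rel_rep_cls] equiv_rel_rep_cls] .

lemma cls_mem_theory_iff:
  assumes "is_theory \<Theta>"
  shows "cls p \<in> cls ` \<Theta> \<longleftrightarrow> deriv \<Theta> (Imp (Imp One One) p)"
proof
  assume "cls p \<in> cls ` \<Theta>"
  then obtain t where "t \<in> \<Theta>" and "equiv_rel p t"
    using cls_eq_iff by (metis imageE)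
  then have "deriv \<Theta> t" and "deriv \<Theta> (Imp t p)"
    using deriv.hyp deriv_from_empty unfolding equiv_rel_def by blast+
  then show "deriv \<Theta> (Imp (Imp One One) p)"
    by (rule deriv.R1)
next
  assume "deriv \<Theta> (Imp (Imp One One) p)"
  then have "Imp (Imp One One) p \<in> \<Theta>"
    using assms unfolding is_theory_def by blast
  moreover have "cls p = cls (Imp (Imp One One) p)"
    using cls_eq_iff equiv_rel_top_imp by blast
  ultimately show "cls p \<in> cls ` \<Theta>"
    by blast
qed

lemma cls_Imp_mem_theory_iff:
  assumes "is_theory \<Theta>"
  shows "cls (Imp a b) \<in> cls ` \<Theta> \<longleftrightarrow> deriv \<Theta> (Imp a b)"
  unfolding cls_mem_theory_iff[OF assms]
  using deriv.R2 deriv_axiom_imp_mp axiom.Q3a by blast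

lemma theory_cls_mv_pos_mem:
  assumes "is_theory \<Theta>"
  shows "mv_pos L_oplus L_neg L_one (cls x) \<in> cls ` \<Theta>"
  unfolding mv_pos_def L_one_def L_neg_cls L_oplus_cls cls_Imp_mem_theory_iff[OF assms]
  using deriv_from_empty[OF deriv_Neg_One_imp] .

lemma theory_cls_mp:
  assumes "is_theory \<Theta>"
    and "cls x \<in> cls ` \<Theta>"
    and "L_oplus (cls y) (L_neg (cls x)) \<in> cls ` \<Theta>"
  shows "cls y \<in> cls ` \<Theta>"
proof -
  have "deriv \<Theta> (Imp (Neg y) (Neg x))"
    using assms(3) unfolding L_neg_cls L_oplus_cls cls_Imp_mem_theory_iff[OF assms(1)] .
  then have "deriv \<Theta> (Imp x y)"
    by (rule deriv_contrapos_rev)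
  moreover have "deriv \<Theta> (Imp (Imp One One) x)"
    using assms(2) unfolding cls_mem_theory_iff[OF assms(1)] .
  ultimately show ?thesis
    unfolding cls_mem_theory_iff[OF assms(1)] using deriv_imp_trans by blast
qed

lemma theory_cls_oplus_shift:
  assumes "is_theory \<Theta>"
    and "L_oplus (cls x) (cls y) \<in> cls ` \<Theta>"
  shows "L_oplus (L_oplus (cls x) (cls t)) (L_oplus (cls y) (L_neg (cls t))) \<in> cls ` \<Theta>"
proof -
  have "deriv \<Theta> (Imp (Neg x) y)"
    using assms(2) unfolding L_oplus_cls cls_Imp_mem_theory_iff[OF assms(1)] .
  then have "deriv \<Theta> (Imp (Neg y) x)"
    by (rule deriv_Neg_imp_swap)
  then have "deriv \<Theta> (Imp (Imp x (Neg t)) (Imp (Neg y) (Neg t)))"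
    using deriv_imp_refl by (rule deriv.R3)
  moreover have "cls (Imp (Neg (Imp (Neg x) t)) (Imp (Neg y) (Neg t)))
      = cls (Imp (Imp x (Neg t)) (Imp (Neg y) (Neg t)))"
    unfolding cls_eq_iff by (intro equiv_rel_Imp equiv_rel_Neg_Imp_Neg equiv_rel_refl)
  ultimately show ?thesis
    unfolding L_neg_cls L_oplus_cls using cls_Imp_mem_theory_iff[OF assms(1)] by simp
qed

theorem proposition5p5:
  assumes "is_theory \<Theta>"
  shows "is_filter Lind L_oplus L_neg L_zero L_one (cls ` \<Theta>)"
  unfolding is_filter_def Lind_def
  using theory_cls_mv_pos_mem[OF assms] theory_cls_mp[OF assms]
    theory_cls_oplus_shift[OF assms]
  by blast

end
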